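(* In the setting of the context (with $\mathcal S_t\subset\mathcal S_{t+1}$ for all $t$), for every $t$: (a) $\mathcal D_t=\{\{s,q\}\subset\{1,\dots,t\}: s\neq q,\ s\notin\mathcal S_q,\ q\notin\mathcal S_s\}$; (b) $\mathcal B_t=\{\{s,q\}\subset\mathcal S_t: s\neq q,\ s\notin\mathcal S_q,\ q\notin\mathcal S_s\}$.
   Context: Delayed feedback protocol over rounds $t=1,\dots,T$: at each round a point is played and its feedback (indexed by the timestamp $t$) is revealed later. $\mathcal S_t\subset\{1,\dots,t-1\}$ is the set of timestamps of feedback available to the active agent at time $t$, and it is assumed that $\mathcal S_t\subset\mathcal S_{t+1}$ for all $t$. Let $\mathcal U_t=\{1,\dots,t-1\}\setminus\mathcal S_t$. Arrival order: $\sigma$ is a permutation of $\{1,\dots,T\}$ such that $\mathcal S_t=\{\sigma(1),\dots,\sigma(|\mathcal S_t|)\}$ for all $t$; $\mathcal R_t=\{\sigma(1),\dots,\sigma(\sigma^{-1}(t)-1)\}$. Define the sets of unordered pairs of distinct elements $\mathcal D_t=\{\{s,q\}: s\in\{1,\dots,t\},\ q\in\mathcal U_s\}$ and $\mathcal B_t=\{\{s,q\}: s\in\mathcal S_t,\ q\in\mathcal R_s\setminus\mathcal S_s\}$. *)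

theory Defs
  imports Main
begin

text \<open>Delayed feedback protocol. Rounds are 1..T; S t is the set of timestamps of
feedback available at time t; sigma is the arrival order (a permutation of {1..T}).\<close>

definition U :: "(nat \<Rightarrow> nat set) \<Rightarrow> nat \<Rightarrow> nat set" where
  "U S t = {1..<t} - S t"

definition R :: "(nat \<Rightarrow> nat) \<Rightarrow> nat \<Rightarrow> nat \<Rightarrow> nat set" where
  "R \<sigma> T t = \<sigma> ` {1..<inv_into {1..T} \<sigma> t}"

definition D :: "(nat \<Rightarrow> nat set) \<Rightarrow> nat \<Rightarrow> nat set set" where
  "D S t = {{s, q} | s q. s \<in> {1..t} \<and> q \<in> U S s}"

definition B :: "(nat \<Rightarrow> nat set) \<Rightarrow> (nat \<Rightarrow> nat) \<Rightarrow> nat \<Rightarrow> nat \<Rightarrow> nat set set" where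
  "B S \<sigma> T t = {{s, q} | s q. s \<in> S t \<and> q \<in> R \<sigma> T s - S s}"

end

theory Submission
  imports Defs
begin

text \<open>
  An unordered pair \<open>{s, q}\<close> of distinct rounds can always be listed so that \<open>q\<close> comes
  first, in time for \<open>D\<close> and in arrival order for \<open>B\<close>. Since \<open>S q\<close> contains only
  timestamps earlier than \<open>q\<close>, the condition \<open>s \<notin> S q\<close> is then automatic for \<open>D\<close>. For \<open>B\<close>,
  every \<open>S u\<close> is an initial segment of the arrival order: so \<open>q \<in> S t\<close> follows from
  \<open>s \<in> S t\<close>, and \<open>s \<in> S q\<close> would force \<open>q \<in> S q\<close>.
\<close>

lemma doubleton_sets_eqI:
  assumes "\<And>s q. P s q \<Longrightarrow> Q s q \<or> Q q s"
    and "\<And>s q. Q s q \<Longrightarrow> P s q \<or> P q s"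
  shows "{{s, q} | s q. P s q} = {{s, q} | s q. Q s q}"
  using assms by (auto simp: insert_commute) blast+

lemma D_eq_unordered_pairs:
  assumes S_sub: "\<And>u. u \<in> {1..t} \<Longrightarrow> S u \<subseteq> {1..<u}"
  shows "D S t = {{s, q} | s q. {s, q} \<subseteq> {1..t} \<and> s \<noteq> q \<and> s \<notin> S q \<and> q \<notin> S s}"
  unfolding D_def
proof (rule doubleton_sets_eqI)
  fix s q
  assume "s \<in> {1..t} \<and> q \<in> U S s"
  then have "q < s" "{s, q} \<subseteq> {1..t}" "q \<notin> S s"
    by (auto simp: U_def)
  moreover from this have "s \<notin> S q"
    using S_sub[of q] by auto
  ultimately show "({s, q} \<subseteq> {1..t} \<and> s \<noteq> q \<and> s \<notin> S q \<and> q \<notin> S s)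
    \<or> ({q, s} \<subseteq> {1..t} \<and> q \<noteq> s \<and> q \<notin> S s \<and> s \<notin> S q)"
    by auto
next
  fix s q
  assume "{s, q} \<subseteq> {1..t} \<and> s \<noteq> q \<and> s \<notin> S q \<and> q \<notin> S s"
  then show "(s \<in> {1..t} \<and> q \<in> U S s) \<or> (q \<in> {1..t} \<and> s \<in> U S q)"
    by (auto simp: U_def)
qed

lemma mem_arrival_prefix_iff:
  fixes \<sigma> :: "nat \<Rightarrow> nat"
  assumes perm: "bij_betw \<sigma> {1..T} {1..T}" and "k \<le> T" and x: "x \<in> {1..T}"
  shows "x \<in> \<sigma> ` {1..k} \<longleftrightarrow> inv_into {1..T} \<sigma> x \<le> k"
proof -
  have x_img: "x \<in> \<sigma> ` {1..T}"
    using x perm by (simp add: bij_betw_def)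
  define j where "j = inv_into {1..T} \<sigma> x"
  have j: "j \<in> {1..T}" "x = \<sigma> j"
    unfolding j_def using inv_into_into[OF x_img] f_inv_into_f[OF x_img] by auto
  have "{1..k} \<subseteq> {1..T}"
    using \<open>k \<le> T\<close> by auto
  then have "x \<in> \<sigma> ` {1..k} \<longleftrightarrow> j \<in> {1..k}"
    using inj_on_image_mem_iff[OF bij_betw_imp_inj_on[OF perm] j(1)] j(2) by simp
  then show ?thesis
    unfolding j_def[symmetric] using j(1) by simp
qed

lemma R_eq_earlier_arrivals:
  fixes \<sigma> :: "nat \<Rightarrow> nat"
  assumes perm: "bij_betw \<sigma> {1..T} {1..T}" and s: "s \<in> {1..T}"
  shows "R \<sigma> T s = {x \<in> {1..T}. inv_into {1..T} \<sigma> x < inv_into {1..T} \<sigma> s}"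
proof -
  let ?pos = "inv_into {1..T} \<sigma>"
  have pos_s: "?pos s \<in> {1..T}"
    using s perm by (intro inv_into_into) (simp add: bij_betw_def)
  have "{1..<?pos s} = {1..?pos s - 1}"
    by auto
  then have R_prefix: "R \<sigma> T s = \<sigma> ` {1..?pos s - 1}"
    by (simp add: R_def)
  have "{1..?pos s - 1} \<subseteq> {1..T}"
    using pos_s by auto
  then have "\<sigma> ` {1..?pos s - 1} \<subseteq> {1..T}"
    using image_mono perm unfolding bij_betw_def by metis
  then have "R \<sigma> T s = {x \<in> {1..T}. x \<in> \<sigma> ` {1..?pos s - 1}}"
    unfolding R_prefix by blast
  also have "\<dots> = {x \<in> {1..T}. ?pos x < ?pos s}"
  proof -
    have k: "?pos s - 1 \<le> T"
      using pos_s by auto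
    have "x \<in> \<sigma> ` {1..?pos s - 1} \<longleftrightarrow> ?pos x < ?pos s" if "x \<in> {1..T}" for x
    proof -
      have "x \<in> \<sigma> ` {1..?pos s - 1} \<longleftrightarrow> ?pos x \<le> ?pos s - 1"
        by (rule mem_arrival_prefix_iff[OF perm k that])
      also have "\<dots> \<longleftrightarrow> ?pos x < ?pos s"
        using pos_s by auto
      finally show ?thesis .
    qed
    then show ?thesis
      by blast
  qed
  finally show ?thesis .
qed

lemma B_eq_unordered_pairs:
  assumes S_sub: "\<And>u. u \<in> {1..T} \<Longrightarrow> S u \<subseteq> {1..<u}"
    and perm: "bij_betw \<sigma> {1..T} {1..T}"
    and arrival: "\<And>u. u \<in> {1..T} \<Longrightarrow> S u = \<sigma> ` {1..card (S u)}"
    and t: "t \<in> {1..T}"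
  shows "B S \<sigma> T t = {{s, q} | s q. {s, q} \<subseteq> S t \<and> s \<noteq> q \<and> s \<notin> S q \<and> q \<notin> S s}"
proof -
  define pos where "pos = inv_into {1..T} \<sigma>"
  have mem_S_iff_pos_le: "x \<in> S u \<longleftrightarrow> pos x \<le> card (S u)" if u: "u \<in> {1..T}" and "x \<in> {1..T}" for u x
  proof -
    have "card (S u) \<le> card {1..<u}"
      using S_sub[OF u] by (intro card_mono) auto
    then have "card (S u) \<le> T"
      using u by auto
    then show ?thesis
      unfolding pos_def using arrival[OF u] mem_arrival_prefix_iff[OF perm _ \<open>x \<in> {1..T}\<close>] by auto
  qed
  have pos_inj: "s = q" if "s \<in> {1..T}" "q \<in> {1..T}" "pos s = pos q" for s q
    using that perm unfolding pos_def bij_betw_def by (metis inv_into_injective)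
  have St: "S t \<subseteq> {1..T}"
    using S_sub[OF t] t by auto
  show ?thesis
    unfolding B_def
  proof (rule doubleton_sets_eqI)
    fix s q
    assume "s \<in> S t \<and> q \<in> R \<sigma> T s - S s"
    then have s: "s \<in> S t" "s \<in> {1..T}" and q: "q \<in> {1..T}" "pos q < pos s" "q \<notin> S s"
      using St R_eq_earlier_arrivals[OF perm] unfolding pos_def by auto
    have "pos s \<le> card (S t)"
      using mem_S_iff_pos_le[OF t s(2)] s(1) by simp
    then have "q \<in> S t"
      using mem_S_iff_pos_le[OF t q(1)] q(2) by simp
    moreover have "s \<notin> S q"
    proof
      assume "s \<in> S q"
      then have "pos s \<le> card (S q)"
        using mem_S_iff_pos_le[OF q(1) s(2)] by simp
      then have "q \<in> S q"
        using mem_S_iff_pos_le[OF q(1) q(1)] q(2) by simp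
      then show False
        using S_sub[OF q(1)] by auto
    qed
    ultimately show "({s, q} \<subseteq> S t \<and> s \<noteq> q \<and> s \<notin> S q \<and> q \<notin> S s)
      \<or> ({q, s} \<subseteq> S t \<and> q \<noteq> s \<and> q \<notin> S s \<and> s \<notin> S q)"
      using s q by auto
  next
    fix s q
    assume pair: "{s, q} \<subseteq> S t \<and> s \<noteq> q \<and> s \<notin> S q \<and> q \<notin> S s"
    then have "s \<in> {1..T}" "q \<in> {1..T}"
      using St by auto
    with pair have "pos s \<noteq> pos q"
      using pos_inj by metis
    with \<open>s \<in> {1..T}\<close> \<open>q \<in> {1..T}\<close> have "q \<in> R \<sigma> T s \<or> s \<in> R \<sigma> T q"
      using R_eq_earlier_arrivals[OF perm] unfolding pos_def by auto
    with pair show "(s \<in> S t \<and> q \<in> R \<sigma> T s - S s) \<or> (q \<in> S t \<and> s \<in> R \<sigma> T q - S q)"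
      by auto
  qed
qed

theorem proposition9:
  fixes T :: nat and S :: "nat \<Rightarrow> nat set" and \<sigma> :: "nat \<Rightarrow> nat" and t :: nat
  assumes S_sub: "\<And>t. t \<in> {1..T} \<Longrightarrow> S t \<subseteq> {1..<t}"
    and S_mono: "\<And>t. t \<in> {1..<T} \<Longrightarrow> S t \<subseteq> S (Suc t)"
    and perm: "bij_betw \<sigma> {1..T} {1..T}"
    and arrival: "\<And>t. t \<in> {1..T} \<Longrightarrow> S t = \<sigma> ` {1..card (S t)}"
    and t: "t \<in> {1..T}"
  shows "D S t = {{s, q} | s q. {s, q} \<subseteq> {1..t} \<and> s \<noteq> q \<and> s \<notin> S q \<and> q \<notin> S s}
    \<and> B S \<sigma> T t = {{s, q} | s q. {s, q} \<subseteq> S t \<and> s \<noteq> q \<and> s \<notin> S q \<and> q \<notin> S s}"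
proof
  show "D S t = {{s, q} | s q. {s, q} \<subseteq> {1..t} \<and> s \<noteq> q \<and> s \<notin> S q \<and> q \<notin> S s}"
    using t by (intro D_eq_unordered_pairs S_sub) auto
  show "B S \<sigma> T t = {{s, q} | s q. {s, q} \<subseteq> S t \<and> s \<noteq> q \<and> s \<notin> S q \<and> q \<notin> S s}"
    using S_sub perm arrival t by (rule B_eq_unordered_pairs)
qed

end
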